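(* Let $A=(a_{jk})\in\mathbb C^{4\times 4}$ be a hermitian matrix such that $\bar zAz^T\geq 0$ for all $z\in\mathbb C^4$ with $z_1z_4+z_2z_3=0$. Then $$\sum_{j,k=1}^{4}a_{jk}\,a_{5-j,5-k}\geq 0.$$ *)

theory Defs
  imports "HOL-Analysis.Analysis" "HOL-Library.Complex_Order"
begin

text \<open>Vectors z in C^4 are functions
  nat => complex, only the values at 1..4 matter.\<close>

definition hermitian4 :: "(nat \<Rightarrow> nat \<Rightarrow> complex) \<Rightarrow> bool" where
  "hermitian4 A \<longleftrightarrow> (\<forall>j\<in>{1..4}. \<forall>k\<in>{1..4}. A k j = cnj (A j k))"

definition herm_form4 :: "(nat \<Rightarrow> nat \<Rightarrow> complex) \<Rightarrow> (nat \<Rightarrow> complex) \<Rightarrow> complex" where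
  "herm_form4 A z = (\<Sum>j=1..4. \<Sum>k=1..4. cnj (z j) * A j k * z k)"

end

theory Submission
  imports Defs
begin

text \<open>
  The form is positive semidefinite on every plane that is isotropic for
  \<open>q(z) = z\<^sub>1 z\<^sub>4 + z\<^sub>2 z\<^sub>3\<close>.
  Take the two complementary isotropic planes \<open>U = span(e\<^sub>1, e\<^sub>2)\<close> and
  \<open>V = span(s e\<^sub>1 - e\<^sub>3, s e\<^sub>2 + e\<^sub>4)\<close>, and write \<open>A\<close> in the basis
  \<open>e\<^sub>1, e\<^sub>2, v\<^sub>1, v\<^sub>2\<close> as a block matrix \<open>[[P, B], [B\<^sup>*, Q]]\<close>.
  A direct computation shows that the antidiagonal sum equals
  \<open>2 (tr (P adj Q) - |tr B|\<^sup>2 + \<parallel>B\<parallel>\<^sup>2)\<close>.  Since \<open>P\<close> and \<open>Q\<close> are positive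
  semidefinite, \<open>tr (P adj Q) \<ge> 0\<close>, and \<open>s\<close> can be chosen to make \<open>tr B = 0\<close>:
  this is possible unless \<open>tr P = 0\<close>, in which case positivity on the isotropic
  planes \<open>span(e\<^sub>1, e\<^sub>3)\<close> and \<open>span(e\<^sub>2, e\<^sub>4)\<close> forces \<open>tr B = 0\<close> anyway.
\<close>

lemma sum_1_to_4: "(\<Sum>j=1..4. f j) = f 1 + f 2 + f 3 + f (4::nat)"
  by (simp add: eval_nat_numeral atLeastAtMostSuc_conv add.commute add.left_commute)

lemma quadratic_nonneg_imp_discriminant:
  fixes x m c :: real
  assumes nonneg: "\<And>t. 0 \<le> x * t\<^sup>2 - 2 * m * t + c" and "0 \<le> x"
  shows "m\<^sup>2 \<le> x * c"
proof (cases "x = 0")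
  case True
  show ?thesis
  proof (rule ccontr)
    assume "\<not> ?thesis"
    then have "m \<noteq> 0" using True by simp
    then show False
      using nonneg[of "(c + 1) / (2 * m)"] True by (simp add: field_simps)
  qed
next
  case False
  then have "x > 0" using assms(2) by simp
  have "0 \<le> x * (m / x)\<^sup>2 - 2 * m * (m / x) + c" by (rule nonneg)
  also have "\<dots> = (x * c - m\<^sup>2) / x"
    using \<open>x > 0\<close> by (simp add: field_simps power2_eq_square)
  finally show ?thesis using \<open>x > 0\<close> by (simp add: zero_le_divide_iff)
qed

definition psd2 :: "complex \<Rightarrow> complex \<Rightarrow> complex \<Rightarrow> bool" where
  "psd2 a b d \<longleftrightarrow>
     (\<forall>c1 c2. 0 \<le> cnj c1 * c1 * a + cnj c1 * c2 * b + cnj c2 * c1 * cnj b + cnj c2 * c2 * d)"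

lemma psd2_diag_nonneg:
  assumes "psd2 a b d"
  shows "0 \<le> a" and "0 \<le> d"
  using assms[unfolded psd2_def, rule_format, of 1 0] assms[unfolded psd2_def, rule_format, of 0 1]
  by simp_all

lemma psd2_cmod_sq_le:
  assumes "psd2 a b d"
  shows "(cmod b)\<^sup>2 \<le> Re a * Re d"
proof -
  define m where "m = (cmod b)\<^sup>2"
  have a: "a = of_real (Re a)" and d: "d = of_real (Re d)"
    using psd2_diag_nonneg[OF assms] by (simp_all add: nonnegative_complex_is_real)
  have ad: "0 \<le> Re a" "0 \<le> Re d"
    using psd2_diag_nonneg[OF assms] by (simp_all add: less_eq_complex_def)
  have b: "b * cnj b = of_real m"
    using complex_norm_square[of b] unfolding m_def by simp
  have "0 \<le> Re a * t\<^sup>2 - 2 * m * t + m * Re d" for t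
  proof -
    have "0 \<le> cnj (of_real t) * of_real t * a + cnj (of_real t) * (- cnj b) * b
              + cnj (- cnj b) * of_real t * cnj b + cnj (- cnj b) * (- cnj b) * d"
      using assms unfolding psd2_def by blast
    also have "\<dots> = of_real t * of_real t * a - 2 * of_real t * (b * cnj b) + (b * cnj b) * d"
      by (simp add: algebra_simps)
    also have "\<dots> = of_real (Re a * t\<^sup>2 - 2 * m * t + m * Re d)"
      by (subst a, subst d, simp add: b power2_eq_square)
    finally show ?thesis by (simp add: less_eq_complex_def)
  qed
  then have "m\<^sup>2 \<le> Re a * (m * Re d)"
    using ad by (intro quadratic_nonneg_imp_discriminant)
  then have "m * m \<le> m * (Re a * Re d)"
    by (simp add: power2_eq_square algebra_simps)
  moreover have "0 \<le> m" unfolding m_def by simp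
  ultimately show ?thesis
    using ad unfolding m_def[symmetric]
    by (cases "m = 0") (simp_all add: mult_le_cancel_left)
qed

lemma psd2_zero_diag: "psd2 0 b d \<Longrightarrow> b = 0"
  using psd2_cmod_sq_le[of 0 b d] by simp

lemma psd2_mixed_nonneg:
  assumes "psd2 a b d" and "psd2 a' b' d'"
  shows "0 \<le> a * d' + d * a' - b * cnj b' - cnj b * b'"
proof -
  have "0 \<le> a" "0 \<le> d" "0 \<le> a'" "0 \<le> d'"
    using psd2_diag_nonneg assms by blast+
  then have real: "Im a = 0" "Im d = 0" "Im a' = 0" "Im d' = 0"
    and nonneg: "0 \<le> Re a" "0 \<le> Re d" "0 \<le> Re a'" "0 \<le> Re d'"
    by (simp_all add: less_eq_complex_def)
  have "Re (b * cnj b') \<le> cmod b * cmod b'"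
    using complex_Re_le_cmod[of "b * cnj b'"] by (simp add: norm_mult)
  also have "\<dots> \<le> sqrt (Re a * Re d) * sqrt (Re a' * Re d')"
    using psd2_cmod_sq_le[OF assms(1)] psd2_cmod_sq_le[OF assms(2)] nonneg
    by (intro mult_mono real_le_rsqrt) simp_all
  also have "\<dots> = sqrt ((Re a * Re d') * (Re d * Re a'))"
    by (simp add: real_sqrt_mult[symmetric] ac_simps)
  also have "\<dots> \<le> (Re a * Re d' + Re d * Re a') / 2"
    using nonneg by (intro arith_geo_mean_sqrt) simp_all
  finally show ?thesis
    using real by (simp add: less_eq_complex_def)
qed

definition sesq4 :: "(nat \<Rightarrow> nat \<Rightarrow> complex) \<Rightarrow> (nat \<Rightarrow> complex) \<Rightarrow> (nat \<Rightarrow> complex) \<Rightarrow> complex" where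
  "sesq4 A u v = (\<Sum>j=1..4. \<Sum>k=1..4. cnj (u j) * A j k * v k)"

definition isotropic4 :: "(nat \<Rightarrow> complex) \<Rightarrow> bool" where
  "isotropic4 z \<longleftrightarrow> z 1 * z 4 + z 2 * z 3 = 0"

definition unit4 :: "nat \<Rightarrow> nat \<Rightarrow> complex" where
  "unit4 i = (\<lambda>j. if j = i then 1 else 0)"

lemma herm_form4_lincomb:
  "herm_form4 A (\<lambda>j. c1 * u j + c2 * v j) =
     cnj c1 * c1 * sesq4 A u u + cnj c1 * c2 * sesq4 A u v
     + cnj c2 * c1 * sesq4 A v u + cnj c2 * c2 * sesq4 A v v"
  unfolding herm_form4_def sesq4_def sum_distrib_left sum.distrib[symmetric]
  by (intro sum.cong refl) (simp add: algebra_simps)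

lemma sesq4_swap:
  assumes "hermitian4 A"
  shows "sesq4 A v u = cnj (sesq4 A u v)"
proof -
  have "cnj (A j k) = A k j" if "j \<in> {1..4}" "k \<in> {1..4}" for j k
    using assms that unfolding hermitian4_def by (metis complex_cnj_cnj)
  then have "cnj (sesq4 A u v) = (\<Sum>j=1..4. \<Sum>k=1..4. u j * A k j * cnj (v k))"
    unfolding sesq4_def by simp
  also have "\<dots> = sesq4 A v u"
    unfolding sesq4_def by (subst sum.swap) (simp add: mult_ac)
  finally show ?thesis by simp
qed

lemma sesq4_unit4:
  assumes "i \<in> {1..4}" and "j \<in> {1..4}"
  shows "sesq4 A (unit4 i) (unit4 j) = A i j"
proof -
  have "i = 1 \<or> i = 2 \<or> i = 3 \<or> i = 4" "j = 1 \<or> j = 2 \<or> j = 3 \<or> j = 4"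
    using assms by auto
  then show ?thesis
    unfolding sesq4_def sum_1_to_4 by (elim disjE) (simp_all add: unit4_def)
qed

lemma psd2_sesq4_isotropic_plane:
  assumes "\<forall>z. isotropic4 z \<longrightarrow> 0 \<le> herm_form4 A z"
    and "hermitian4 A"
    and "\<And>c1 c2. isotropic4 (\<lambda>j. c1 * u j + c2 * v j)"
  shows "psd2 (sesq4 A u u) (sesq4 A u v) (sesq4 A v v)"
  unfolding psd2_def
proof (intro allI)
  fix c1 c2
  have "0 \<le> herm_form4 A (\<lambda>j. c1 * u j + c2 * v j)"
    using assms(1,3) by blast
  then show "0 \<le> cnj c1 * c1 * sesq4 A u u + cnj c1 * c2 * sesq4 A u v
                 + cnj c2 * c1 * cnj (sesq4 A u v) + cnj c2 * c2 * sesq4 A v v"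
    by (simp add: herm_form4_lincomb sesq4_swap[OF assms(2), of v u])
qed

lemma psd2_coordinate_plane:
  assumes pos: "\<forall>z. isotropic4 z \<longrightarrow> 0 \<le> herm_form4 A z" and herm: "hermitian4 A"
    and ij: "i \<in> {1..4}" "j \<in> {1..4}" "i + j \<noteq> 5"
  shows "psd2 (A i i) (A i j) (A j j)"
proof -
  have "isotropic4 (\<lambda>k. c1 * unit4 i k + c2 * unit4 j k)" for c1 c2
  proof -
    have "i = 1 \<or> i = 2 \<or> i = 3 \<or> i = 4" "j = 1 \<or> j = 2 \<or> j = 3 \<or> j = 4"
      using ij(1,2) by auto
    then show ?thesis
      using ij(3) unfolding isotropic4_def unit4_def by (elim disjE) simp_all
  qed
  then show ?thesis
    using psd2_sesq4_isotropic_plane[OF pos herm, of "unit4 i" "unit4 j"] ij(1,2)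
    by (simp add: sesq4_unit4)
qed

definition plane_vec1 :: "complex \<Rightarrow> nat \<Rightarrow> complex" where
  "plane_vec1 s = (\<lambda>j. if j = 1 then s else if j = 3 then -1 else 0)"

definition plane_vec2 :: "complex \<Rightarrow> nat \<Rightarrow> complex" where
  "plane_vec2 s = (\<lambda>j. if j = 2 then s else if j = 4 then 1 else 0)"

lemma isotropic4_plane_vec:
  "isotropic4 (\<lambda>j. c1 * plane_vec1 s j + c2 * plane_vec2 s j)"
  by (simp add: isotropic4_def plane_vec1_def plane_vec2_def algebra_simps)

lemma antidiagonal_sum_decomposition:
  fixes A :: "nat \<Rightarrow> nat \<Rightarrow> complex" and s :: complex
  defines "e1 \<equiv> unit4 1" and "e2 \<equiv> unit4 2" and "v1 \<equiv> plane_vec1 s" and "v2 \<equiv> plane_vec2 s"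
  shows "(\<Sum>j=1..4. \<Sum>k=1..4. A j k * A (5 - j) (5 - k)) =
     2 * (sesq4 A e1 e1 * sesq4 A v2 v2 + sesq4 A e2 e2 * sesq4 A v1 v1
          - sesq4 A e1 e2 * sesq4 A v2 v1 - sesq4 A e2 e1 * sesq4 A v1 v2
          - (sesq4 A e1 v1 + sesq4 A e2 v2) * (sesq4 A v1 e1 + sesq4 A v2 e2)
          + sesq4 A e1 v1 * sesq4 A v1 e1 + sesq4 A e1 v2 * sesq4 A v2 e1
          + sesq4 A e2 v1 * sesq4 A v1 e2 + sesq4 A e2 v2 * sesq4 A v2 e2)"
  unfolding e1_def e2_def v1_def v2_def sesq4_def sum_1_to_4
  by (simp add: unit4_def plane_vec1_def plane_vec2_def algebra_simps)

lemma cross_trace_eq: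
  "sesq4 A (unit4 1) (plane_vec1 s) + sesq4 A (unit4 2) (plane_vec2 s)
     = s * (A 1 1 + A 2 2) - (A 1 3 - A 2 4)"
  unfolding sesq4_def sum_1_to_4
  by (simp add: unit4_def plane_vec1_def plane_vec2_def algebra_simps)

lemma cross_trace_vanishes:
  assumes pos: "\<forall>z. isotropic4 z \<longrightarrow> 0 \<le> herm_form4 A z" and herm: "hermitian4 A"
  defines "s \<equiv> (A 1 3 - A 2 4) / (A 1 1 + A 2 2)"
  shows "sesq4 A (unit4 1) (plane_vec1 s) + sesq4 A (unit4 2) (plane_vec2 s) = 0"
proof (cases "A 1 1 + A 2 2 = 0")
  case False
  then show ?thesis unfolding cross_trace_eq s_def by simp
next
  case True
  have "psd2 (A 1 1) (A 1 3) (A 3 3)" "psd2 (A 2 2) (A 2 4) (A 4 4)"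
    by (simp_all add: psd2_coordinate_plane[OF pos herm])
  moreover have "A 1 1 = 0" "A 2 2 = 0"
    using True psd2_diag_nonneg[OF calculation(1)] psd2_diag_nonneg[OF calculation(2)]
    by (metis add_nonneg_eq_0_iff)+
  ultimately have "A 1 3 = 0" "A 2 4 = 0"
    by (metis psd2_zero_diag)+
  then show ?thesis
    unfolding cross_trace_eq using True by simp
qed

lemma antidiagonal_sum_nonneg:
  assumes herm: "hermitian4 A"
    and P: "psd2 (A 1 1) (A 1 2) (A 2 2)"
    and Q: "psd2 (sesq4 A (plane_vec1 s) (plane_vec1 s)) (sesq4 A (plane_vec1 s) (plane_vec2 s))
                 (sesq4 A (plane_vec2 s) (plane_vec2 s))"
    and trace: "sesq4 A (unit4 1) (plane_vec1 s) + sesq4 A (unit4 2) (plane_vec2 s) = 0"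
  shows "0 \<le> (\<Sum>j=1..4. \<Sum>k=1..4. A j k * A (5 - j) (5 - k))"
proof -
  define e1 e2 v1 v2
    where "e1 = unit4 1" and "e2 = unit4 2" and "v1 = plane_vec1 s" and "v2 = plane_vec2 s"
  note sum_eq = antidiagonal_sum_decomposition[of A s, folded e1_def e2_def v1_def v2_def]
  have mixed: "0 \<le> A 1 1 * sesq4 A v2 v2 + A 2 2 * sesq4 A v1 v1
                   - A 1 2 * cnj (sesq4 A v1 v2) - cnj (A 1 2) * sesq4 A v1 v2"
    using psd2_mixed_nonneg[OF P Q] unfolding v1_def v2_def .
  have sq: "0 \<le> z * cnj z" for z :: complex
    by (simp add: less_eq_complex_def)
  have entries: "sesq4 A e1 e1 = A 1 1" "sesq4 A e1 e2 = A 1 2" "sesq4 A e2 e2 = A 2 2"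
    "sesq4 A e2 e1 = cnj (A 1 2)"
    using sesq4_swap[OF herm, of e2 e1] by (simp_all add: e1_def e2_def sesq4_unit4)
  have "0 \<le> 2 * (A 1 1 * sesq4 A v2 v2 + A 2 2 * sesq4 A v1 v1
          - A 1 2 * cnj (sesq4 A v1 v2) - cnj (A 1 2) * sesq4 A v1 v2
          + sesq4 A e1 v1 * cnj (sesq4 A e1 v1) + sesq4 A e1 v2 * cnj (sesq4 A e1 v2)
          + sesq4 A e2 v1 * cnj (sesq4 A e2 v1) + sesq4 A e2 v2 * cnj (sesq4 A e2 v2))"
    by (intro mult_nonneg_nonneg[of 2] add_nonneg_nonneg mixed sq) (simp add: less_eq_complex_def)
  also have "\<dots> = (\<Sum>j=1..4. \<Sum>k=1..4. A j k * A (5 - j) (5 - k))"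
    unfolding sum_eq trace[folded e1_def e2_def v1_def v2_def] entries
    by (simp add: sesq4_swap[OF herm, of v2 v1] sesq4_swap[OF herm, of v1 e1]
        sesq4_swap[OF herm, of v2 e1] sesq4_swap[OF herm, of v1 e2] sesq4_swap[OF herm, of v2 e2])
  finally show ?thesis .
qed

theorem theorem7:
  fixes A :: "nat \<Rightarrow> nat \<Rightarrow> complex"
  assumes "hermitian4 A"
    and "\<forall>z :: nat \<Rightarrow> complex. z 1 * z 4 + z 2 * z 3 = 0 \<longrightarrow> herm_form4 A z \<ge> 0"
  shows "(\<Sum>j=1..4. \<Sum>k=1..4. A j k * A (5 - j) (5 - k)) \<ge> 0"
proof -
  note herm = assms(1)
  have pos: "\<forall>z. isotropic4 z \<longrightarrow> 0 \<le> herm_form4 A z"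
    using assms(2) unfolding isotropic4_def .
  define s where "s = (A 1 3 - A 2 4) / (A 1 1 + A 2 2)"
  show ?thesis
  proof (rule antidiagonal_sum_nonneg[OF herm])
    show "psd2 (A 1 1) (A 1 2) (A 2 2)"
      by (simp add: psd2_coordinate_plane[OF pos herm])
    show "psd2 (sesq4 A (plane_vec1 s) (plane_vec1 s)) (sesq4 A (plane_vec1 s) (plane_vec2 s))
            (sesq4 A (plane_vec2 s) (plane_vec2 s))"
      by (rule psd2_sesq4_isotropic_plane[OF pos herm isotropic4_plane_vec])
    show "sesq4 A (unit4 1) (plane_vec1 s) + sesq4 A (unit4 2) (plane_vec2 s) = 0"
      unfolding s_def by (rule cross_trace_vanishes[OF pos herm])
  qed
qed

end
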